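(* Under the Gaussian copula model, fix $m\in\mathbb N$, $\alpha\in(0,1]$ and $\rho\in(0,1]$. Then: (a) for all integers $n,n'$ with $m\le n\le n'$, $$p^{\mathrm{G}}_{\mathrm{success}}(n,m,\alpha,\rho)\le p^{\mathrm{G}}_{\mathrm{success}}(n',m,\alpha,\rho);$$ (b) $\displaystyle\lim_{n\to\infty}p^{\mathrm{G}}_{\mathrm{success}}(n,m,\alpha,\rho)=1.$
   Context: Ordinal optimisation model: let $(Z_1,X_1),\dots,(Z_n,X_n)$ be i.i.d. copies of a pair $(Z,X)$ of real random variables. Order $Z_1,\dots,Z_n$ increasingly as $Z_{1:n}\le\dots\le Z_{n:n}$ and let $X_{\langle i\rangle}$ denote the $X$-value paired with $Z_{i:n}$. Let $x^*_\alpha$ be the $\alpha$-quantile of $X$. The success probability is $\Pr(\min_{1\le i\le m}X_{\langle i\rangle}\le x^*_\alpha)$. Gaussian copula model with correlation $\rho$: $Z,X$ have continuous marginal CDFs $F_Z,F_X$ and joint CDF $\boldsymbol\Phi_{\rho}(\Phi^{-1}(F_Z(z)),\Phi^{-1}(F_X(x)))$, with $\Phi$ the standard normal CDF and $\boldsymbol\Phi_\rho$ the standard bivariate normal CDF with correlation $\rho$. The success probability in this model is $p^{\mathrm{G}}_{\mathrm{success}}(n,m,\alpha,\rho)$. *)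

theory Defs
  imports "HOL-Probability.Probability"
begin

definition std_normal :: "real measure" where
  "std_normal = density lborel std_normal_density"

text \<open>Law of a pair (Z,X) with standard normal marginals and Gaussian copula with
  correlation rho: (Z,X) = (U, rho U + sqrt(1 - rho^2) V), U,V i.i.d. standard normal.
  (This also covers the degenerate case rho = 1.)\<close>
definition gauss_pair :: "real \<Rightarrow> (real \<times> real) measure" where
  "gauss_pair \<rho> = distr (std_normal \<Otimes>\<^sub>M std_normal) (borel \<Otimes>\<^sub>M borel)
     (\<lambda>(u, v). (u, \<rho> * u + sqrt (1 - \<rho>\<^sup>2) * v))"

text \<open>alpha-quantile of X (generalised inverse of its CDF), as an extended real
  (equals +infinity when alpha = 1).\<close>
definition xstar :: "real \<Rightarrow> real \<Rightarrow> ereal" where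
  "xstar \<alpha> \<rho> = Inf {ereal x | x. \<alpha> \<le> measure (gauss_pair \<rho>) {p. snd p \<le> x}}"

text \<open>Success probability: among n i.i.d. pairs (Z_j, X_j), the pairs whose Z-value is
  among the m smallest (Z_j has fewer than m strictly smaller Z-values; ties have
  probability zero) contain one with X_j \<le> x*_alpha.\<close>
definition p_success_G :: "nat \<Rightarrow> nat \<Rightarrow> real \<Rightarrow> real \<Rightarrow> real" where
  "p_success_G n m \<alpha> \<rho> =
     measure (PiM {..<n} (\<lambda>_. gauss_pair \<rho>))
       {\<omega> \<in> space (PiM {..<n} (\<lambda>_. gauss_pair \<rho>)).
          \<exists>j<n. card {k \<in> {..<n}. fst (\<omega> k) < fst (\<omega> j)} < m
               \<and> ereal (snd (\<omega> j)) \<le> xstar \<alpha> \<rho>}"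

end

theory Submission
  imports Defs
begin

text \<open>
  Write the pairs as \<open>(Z\<^sub>j, X\<^sub>j) = (U\<^sub>j, \<rho> U\<^sub>j + \<sigma> V\<^sub>j)\<close> with \<open>\<sigma> = sqrt (1 - \<rho>\<^sup>2)\<close> and all
  \<open>U\<^sub>j, V\<^sub>j\<close> independent standard normal. Given \<open>U\<close>, the failure event (no selected \<open>X\<^sub>j\<close> is at
  most \<open>x*\<^sub>\<alpha>\<close>) has probability \<open>\<Prod> g (U\<^sub>j)\<close> over the indices of the \<open>m\<close> smallest \<open>U\<^sub>j\<close>, where
  \<open>g x = P (\<rho> x + \<sigma> V > x*\<^sub>\<alpha>)\<close> is nondecreasing with values in \<open>[0, 1]\<close>. A new sample either
  adds a factor \<open>\<le> 1\<close> or replaces the factor of the current \<open>m\<close>-th smallest value by the factor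
  of a smaller value, so the failure probability decreases in \<open>n\<close>. Since the smallest \<open>U\<^sub>j\<close> is
  always selected, the failure probability is at most \<open>g x + P (U \<ge> x)\<^sup>n\<close> for every \<open>x\<close>;
  and \<open>g x \<rightarrow> 0\<close> as \<open>x \<rightarrow> -\<infinity>\<close> because \<open>x*\<^sub>\<alpha> > -\<infinity>\<close> for \<open>\<alpha> > 0\<close>.
\<close>

section \<open>Independent pairs in finite product spaces\<close>

lemma emeasure_pair_PiM_product_sections:
  assumes "finite I" "prob_space N"
    and X: "X \<in> sets (M \<Otimes>\<^sub>M PiM I (\<lambda>_. N))"
    and sections: "\<And>u. u \<in> space M \<Longrightarrow> Pair u -` X = Pi\<^sub>E I (B u)"
    and B: "\<And>u j. u \<in> space M \<Longrightarrow> j \<in> I \<Longrightarrow> B u j \<in> sets N"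
  shows "emeasure (M \<Otimes>\<^sub>M PiM I (\<lambda>_. N)) X = (\<integral>\<^sup>+u. (\<Prod>j\<in>I. emeasure N (B u j)) \<partial>M)"
proof -
  interpret N: prob_space N by fact
  interpret PN: product_prob_space "\<lambda>_. N" ..
  have "sigma_finite_measure (PiM I (\<lambda>_. N))"
    by (intro prob_space_imp_sigma_finite prob_space_PiM N.prob_space_axioms)
  then have "emeasure (M \<Otimes>\<^sub>M PiM I (\<lambda>_. N)) X = (\<integral>\<^sup>+u. emeasure (PiM I (\<lambda>_. N)) (Pair u -` X) \<partial>M)"
    using X by (rule sigma_finite_measure.emeasure_pair_measure_alt)
  also have "\<dots> = (\<integral>\<^sup>+u. (\<Prod>j\<in>I. emeasure N (B u j)) \<partial>M)"
    using sections B by (intro nn_integral_cong) (simp add: PN.emeasure_PiM \<open>finite I\<close>)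
  finally show ?thesis .
qed

lemma PiM_distr_pair_measure:
  assumes I: "finite I" and "prob_space M" "prob_space N"
    and T [measurable]: "T \<in> M \<Otimes>\<^sub>M N \<rightarrow>\<^sub>M K"
  shows "PiM I (\<lambda>_. distr (M \<Otimes>\<^sub>M N) K T)
    = distr (PiM I (\<lambda>_. M) \<Otimes>\<^sub>M PiM I (\<lambda>_. N)) (PiM I (\<lambda>_. K)) (\<lambda>(x, y). \<lambda>j\<in>I. T (x j, y j))"
    (is "_ = distr ?MN _ ?\<Psi>")
proof -
  interpret M: prob_space M by fact
  interpret N: prob_space N by fact
  interpret MN: pair_prob_space M N ..
  interpret PM: product_prob_space "\<lambda>_. M" ..
  interpret PK: product_prob_space "\<lambda>_. distr (M \<Otimes>\<^sub>M N) K T"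
    by (intro product_prob_spaceI MN.prob_space_distr T)
  have \<Psi> [measurable]: "?\<Psi> \<in> ?MN \<rightarrow>\<^sub>M PiM I (\<lambda>_. K)"
    by measurable
  show ?thesis
  proof (rule sym, rule PK.PiM_eqI[OF I])
    show "sets (distr ?MN (PiM I (\<lambda>_. K)) ?\<Psi>) = sets (PiM I (\<lambda>_. distr (M \<Otimes>\<^sub>M N) K T))"
      unfolding sets_distr by (rule sets_PiM_cong) simp_all
  next
    fix A assume A: "\<And>j. j \<in> I \<Longrightarrow> A j \<in> sets (distr (M \<Otimes>\<^sub>M N) K T)"
    define Q where "Q j = T -` A j \<inter> space (M \<Otimes>\<^sub>M N)" for j
    have Q: "Q j \<in> sets (M \<Otimes>\<^sub>M N)" if "j \<in> I" for j
      unfolding Q_def using A[OF that] by (intro measurable_sets[OF T]) simp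
    have "emeasure (distr ?MN (PiM I (\<lambda>_. K)) ?\<Psi>) (Pi\<^sub>E I A)
        = emeasure ?MN (?\<Psi> -` Pi\<^sub>E I A \<inter> space ?MN)"
      using A by (intro emeasure_distr \<Psi>) (auto intro!: sets_PiM_I_finite I)
    also have "\<dots> = (\<integral>\<^sup>+x. (\<Prod>j\<in>I. emeasure N (Pair (x j) -` Q j)) \<partial>PiM I (\<lambda>_. M))"
      using A Q I
      by (intro emeasure_pair_PiM_product_sections measurable_sets[OF \<Psi>] N.prob_space_axioms)
        (auto intro!: sets_PiM_I_finite sets_Pair1[OF Q] simp: Q_def space_pair_measure space_PiM PiE_iff)
    also have "\<dots> = (\<Prod>j\<in>I. \<integral>\<^sup>+u. emeasure N (Pair u -` Q j) \<partial>M)"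
      using Q by (intro PM.product_nn_integral_prod I) (auto intro: N.measurable_emeasure_Pair)
    also have "\<dots> = (\<Prod>j\<in>I. emeasure (distr (M \<Otimes>\<^sub>M N) K T) (A j))"
      using Q A by (intro prod.cong refl) (simp add: N.emeasure_pair_measure_alt emeasure_distr Q_def)
    finally show "emeasure (distr ?MN (PiM I (\<lambda>_. K)) ?\<Psi>) (Pi\<^sub>E I A)
        = (\<Prod>j\<in>I. emeasure (distr (M \<Otimes>\<^sub>M N) K T) (A j))" .
  qed
qed

lemma measurable_component_borel:
  assumes "sets M = sets borel" "j \<in> I"
  shows "(\<lambda>u. u j) \<in> borel_measurable (PiM I (\<lambda>_. M))"
  using measurable_component_singleton[OF \<open>j \<in> I\<close>, of "\<lambda>_. M"]
  by (simp add: measurable_cong_sets[OF refl \<open>sets M = sets borel\<close>])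

lemma AE_PiM_component_neq:
  fixes M :: "real measure"
  assumes "prob_space M" "sets M = sets borel" "\<And>x. emeasure M {x} = 0"
    and "finite I" "j \<in> I" "k \<in> I" "j \<noteq> k"
  shows "AE u in PiM I (\<lambda>_. M). u j \<noteq> u k"
proof -
  interpret M: prob_space M by fact
  interpret PM: product_prob_space "\<lambda>_. M" ..
  let ?D = "{u \<in> space (PiM I (\<lambda>_. M)). u j = u k}"
  have [measurable]: "(\<lambda>u. u i) \<in> borel_measurable (PiM I (\<lambda>_. M))" if "i \<in> I" for i
    using assms(2) that by (rule measurable_component_borel)
  have D: "?D \<in> sets (PiM I (\<lambda>_. M))"
    using assms(5,6) by measurable
  have I: "insert j (I - {j}) = I"
    using \<open>j \<in> I\<close> by auto
  have "emeasure (PiM I (\<lambda>_. M)) ?D = (\<integral>\<^sup>+u. indicator ?D u \<partial>PiM I (\<lambda>_. M))"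
    using D by simp
  also have "\<dots> = (\<integral>\<^sup>+x. (\<integral>\<^sup>+y. indicator ?D (x(j := y)) \<partial>M) \<partial>PiM (I - {j}) (\<lambda>_. M))"
    using PM.product_nn_integral_insert[of "I - {j}" j "indicator ?D"] \<open>finite I\<close> D
    unfolding I by simp
  also have "\<dots> = (\<integral>\<^sup>+x. emeasure M {x k} \<partial>PiM (I - {j}) (\<lambda>_. M))"
  proof (rule nn_integral_cong)
    fix x assume "x \<in> space (PiM (I - {j}) (\<lambda>_. M))"
    then have "indicator ?D (x(j := y)) = (indicator {x k} y :: ennreal)" for y
      using assms(5-7) by (auto simp: indicator_def space_PiM PiE_iff extensional_def)
    then show "(\<integral>\<^sup>+y. indicator ?D (x(j := y)) \<partial>M) = emeasure M {x k}"
      using assms(2) by simp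
  qed
  finally have "emeasure (PiM I (\<lambda>_. M)) ?D = 0"
    using assms(3) by simp
  then show ?thesis
    using D by (subst AE_iff_measurable[of ?D]) auto
qed

lemma AE_PiM_inj_on:
  fixes M :: "real measure"
  assumes "prob_space M" "sets M = sets borel" "\<And>x. emeasure M {x} = 0" "finite I"
  shows "AE u in PiM I (\<lambda>_. M). inj_on u I"
proof -
  have "AE u in PiM I (\<lambda>_. M). \<forall>j\<in>I. \<forall>k\<in>I. j \<noteq> k \<longrightarrow> u j \<noteq> u k"
    using assms by (intro AE_finite_allI) (auto intro: AE_PiM_component_neq)
  then show ?thesis
    by eventually_elim (auto simp: inj_on_def)
qed

section \<open>Products over the lowest coordinates\<close>

definition lower_count :: "nat \<Rightarrow> (nat \<Rightarrow> 'a::linorder) \<Rightarrow> nat \<Rightarrow> nat" where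
  "lower_count n u j = card {k \<in> {..<n}. u k < u j}"

definition prod_lowest :: "nat \<Rightarrow> nat \<Rightarrow> ('a::linorder \<Rightarrow> real) \<Rightarrow> (nat \<Rightarrow> 'a) \<Rightarrow> real" where
  "prod_lowest n m g u = (\<Prod>j<n. if lower_count n u j < m then g (u j) else 1)"

lemma lower_count_Suc:
  "lower_count (Suc n) u j = lower_count n u j + (if u n < u j then 1 else 0)"
proof -
  have "{k \<in> {..<Suc n}. u k < u j} = {k \<in> {..<n}. u k < u j} \<union> (if u n < u j then {n} else {})"
    by (auto simp: less_Suc_eq)
  then show ?thesis
    by (simp add: lower_count_def card_insert_if)
qed

lemma lower_count_mono: "u a \<le> u b \<Longrightarrow> lower_count n u a \<le> lower_count n u b"
  unfolding lower_count_def by (rule card_mono) auto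

lemma lower_count_strict_mono: "a < n \<Longrightarrow> u a < u b \<Longrightarrow> lower_count n u a < lower_count n u b"
  unfolding lower_count_def by (rule psubset_card_mono) auto

lemma lower_count_cong:
  "(\<And>k. k < n \<Longrightarrow> u k = u' k) \<Longrightarrow> j < n \<Longrightarrow> lower_count n u j = lower_count n u' j"
  unfolding lower_count_def by (intro arg_cong[where f = card]) auto

lemma lower_count_eq_sum: "lower_count n u j = (\<Sum>k<n. if u k < u j then 1 else 0)"
  unfolding lower_count_def by (simp add: sum.If_cases Int_def)

lemma pred_lower_count_less:
  fixes f :: "'a \<Rightarrow> nat \<Rightarrow> real"
  assumes f: "\<And>k. k < n \<Longrightarrow> (\<lambda>x. f x k) \<in> borel_measurable M"
    and [measurable]: "(\<lambda>x. f x j) \<in> borel_measurable M"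
  shows "Measurable.pred M (\<lambda>x. lower_count n (f x) j < m)"
proof -
  have [measurable]: "(\<lambda>x. lower_count n (f x) j) \<in> borel_measurable M"
    unfolding lower_count_eq_sum
  proof (rule borel_measurable_sum)
    fix k assume "k \<in> {..<n}"
    with f have [measurable]: "(\<lambda>x. f x k) \<in> borel_measurable M" by simp
    show "(\<lambda>x. if f x k < f x j then 1 else 0 :: nat) \<in> borel_measurable M"
      by measurable
  qed
  show ?thesis by measurable
qed

lemma prod_lowest_le_1:
  assumes "\<And>x. 0 \<le> g x" "\<And>x. g x \<le> 1"
  shows "prod_lowest n m g u \<le> 1"
  using assms by (auto simp: prod_lowest_def intro!: prod_le_1)

lemma prod_lowest_le_factor:
  assumes "j < n" "0 < m" and g: "mono g" "\<And>x. 0 \<le> g x" "\<And>x. g x \<le> 1"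
  shows "prod_lowest n m g u \<le> g (u j)"
proof -
  have "Min (u ` {..<n}) \<in> u ` {..<n}"
    using \<open>j < n\<close> by (intro Min_in) auto
  then obtain i where i: "i < n" "u i = Min (u ` {..<n})"
    by auto
  then have min: "u i \<le> u k" if "k < n" for k
    using that by simp
  then have "lower_count n u i = 0"
    by (auto simp: lower_count_def not_less[symmetric])
  then have "prod_lowest n m g u
      = g (u i) * (\<Prod>k\<in>{..<n} - {i}. if lower_count n u k < m then g (u k) else 1)"
    using i \<open>0 < m\<close> by (simp add: prod_lowest_def prod.remove)
  also have "\<dots> \<le> g (u i)"
    using g by (intro mult_right_le_one_le prod_nonneg prod_le_1) auto
  also have "\<dots> \<le> g (u j)"
    using min \<open>j < n\<close> by (intro monoD[OF \<open>mono g\<close>])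
  finally show ?thesis .
qed

lemma prod_lowest_Suc_le:
  assumes inj: "inj_on u {..<Suc n}" and g: "mono g" "\<And>x. 0 \<le> g x" "\<And>x. g x \<le> 1"
  shows "prod_lowest (Suc n) m g u \<le> prod_lowest n m g u"
proof -
  define a where "a j = (if lower_count n u j < m then g (u j) else 1)" for j
  define b where "b j = (if lower_count (Suc n) u j < m then g (u j) else 1)" for j
  have a_bounds: "0 \<le> a j" "a j \<le> 1" and b_bounds: "0 \<le> b j" "b j \<le> 1" for j
    using g by (auto simp: a_def b_def)
  \<comment> \<open>Only the old \<open>m\<close>-th smallest value can be pushed out of the selection, by a smaller
    \<open>u n\<close>; then \<open>u n\<close> is selected and contributes the smaller factor.\<close>
  have displaced: "lower_count n u j = m - 1 \<and> u n < u j \<and> a j = g (u j) \<and> b j = 1"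
    if "a j \<noteq> b j" for j
    using that by (auto simp: a_def b_def lower_count_Suc split: if_splits)
  have displaced_unique: "j = d" if "j < n" "d < n" "a j \<noteq> b j" "a d \<noteq> b d" for j d
  proof (rule ccontr)
    assume "j \<noteq> d"
    with inj \<open>j < n\<close> \<open>d < n\<close> have "u j \<noteq> u d"
      by (auto dest: inj_onD)
    then have "u j < u d \<or> u d < u j"
      by auto
    then have "lower_count n u j \<noteq> lower_count n u d"
      using \<open>j < n\<close> \<open>d < n\<close> by (auto dest: lower_count_strict_mono[of _ n u])
    with displaced[OF \<open>a j \<noteq> b j\<close>] displaced[OF \<open>a d \<noteq> b d\<close>] show False
      by simp
  qed
  have "(\<Prod>j<Suc n. b j) \<le> (\<Prod>j<n. a j)"
  proof (cases "\<exists>d<n. a d \<noteq> b d")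
    case False
    then have "(\<Prod>j<Suc n. b j) = (\<Prod>j<n. a j) * b n"
      by simp
    also have "\<dots> \<le> (\<Prod>j<n. a j)"
      using a_bounds b_bounds by (intro mult_right_le_one_le prod_nonneg) auto
    finally show ?thesis .
  next
    case True
    then obtain d where d: "d < n" "a d \<noteq> b d"
      by blast
    note d_displaced = displaced[OF d(2)]
    have rest: "(\<Prod>j\<in>{..<n} - {d}. b j) = (\<Prod>j\<in>{..<n} - {d}. a j)"
      using d by (intro prod.cong refl) (fastforce dest: displaced_unique[OF _ d(1) _ d(2)])
    have "lower_count (Suc n) u n \<le> lower_count n u d"
      using lower_count_mono[of u n d n] d_displaced by (simp add: lower_count_Suc less_imp_le)
    then have "b n = g (u n)"
      using d_displaced d by (auto simp: b_def a_def split: if_splits)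
    also have "\<dots> \<le> a d"
      using d_displaced by (simp add: monoD[OF \<open>mono g\<close>] less_imp_le)
    finally have "(\<Prod>j\<in>{..<n} - {d}. a j) * b n \<le> (\<Prod>j\<in>{..<n} - {d}. a j) * a d"
      using a_bounds by (intro mult_left_mono prod_nonneg) auto
    then show ?thesis
      using d d_displaced rest by (simp add: prod.remove[of "{..<n}" d] mult_ac)
  qed
  then show ?thesis
    by (simp add: prod_lowest_def a_def b_def)
qed

lemma prod_lowest_restrict: "prod_lowest n m g (restrict u {..<n}) = prod_lowest n m g u"
  unfolding prod_lowest_def
  by (intro prod.cong refl) (simp add: lower_count_cong[of n "restrict u {..<n}" u])

lemma borel_measurable_prod_lowest [measurable]:
  fixes g :: "real \<Rightarrow> real"
  assumes [measurable]: "g \<in> borel_measurable borel" and M: "sets M = sets borel"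
  shows "prod_lowest n m g \<in> borel_measurable (PiM {..<n} (\<lambda>_. M))"
  unfolding prod_lowest_def
proof (rule borel_measurable_prod)
  fix j assume "j \<in> {..<n}"
  have component: "(\<lambda>u. u k) \<in> borel_measurable (PiM {..<n} (\<lambda>_. M))" if "k < n" for k
    using M that by (intro measurable_component_borel) auto
  have [measurable]: "Measurable.pred (PiM {..<n} (\<lambda>_. M)) (\<lambda>u. lower_count n u j < m)"
    using component \<open>j \<in> {..<n}\<close> by (intro pred_lower_count_less) auto
  have [measurable]: "(\<lambda>u. u j) \<in> borel_measurable (PiM {..<n} (\<lambda>_. M))"
    using component \<open>j \<in> {..<n}\<close> by simp
  show "(\<lambda>u. if lower_count n u j < m then g (u j) else 1) \<in> borel_measurable (PiM {..<n} (\<lambda>_. M))"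
    by measurable
qed

lemma nn_integral_prod_lowest_Suc_le:
  fixes M :: "real measure"
  assumes M: "prob_space M" "sets M = sets borel" "\<And>x. emeasure M {x} = 0"
    and g: "mono g" "\<And>x. 0 \<le> g x" "\<And>x. g x \<le> 1"
  shows "(\<integral>\<^sup>+u. ennreal (prod_lowest (Suc n) m g u) \<partial>PiM {..<Suc n} (\<lambda>_. M))
    \<le> (\<integral>\<^sup>+u. ennreal (prod_lowest n m g u) \<partial>PiM {..<n} (\<lambda>_. M))"
proof -
  interpret M: prob_space M by fact
  interpret PM: product_prob_space "\<lambda>_. M" ..
  have [measurable]: "g \<in> borel_measurable borel"
    using g(1) by (rule borel_measurable_mono)
  have [measurable]: "prod_lowest n m g \<in> borel_measurable (PiM {..<n} (\<lambda>_. M))"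
    using M(2) by measurable
  have "(\<integral>\<^sup>+u. ennreal (prod_lowest (Suc n) m g u) \<partial>PiM {..<Suc n} (\<lambda>_. M))
      \<le> (\<integral>\<^sup>+u. ennreal (prod_lowest n m g u) \<partial>PiM {..<Suc n} (\<lambda>_. M))"
    using AE_PiM_inj_on[OF M, of "{..<Suc n}"]
    by (intro nn_integral_mono_AE) (auto elim!: eventually_mono intro!: ennreal_leI prod_lowest_Suc_le g)
  also have "\<dots> = (\<integral>\<^sup>+u. ennreal (prod_lowest n m g (restrict u {..<n})) \<partial>PiM {..<Suc n} (\<lambda>_. M))"
    by (simp add: prod_lowest_restrict)
  also have "\<dots> = (\<integral>\<^sup>+u. ennreal (prod_lowest n m g u)
      \<partial>distr (PiM {..<Suc n} (\<lambda>_. M)) (PiM {..<n} (\<lambda>_. M)) (\<lambda>u. restrict u {..<n}))"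
    by (subst nn_integral_distr) (auto intro: measurable_restrict_subset)
  also have "\<dots> = (\<integral>\<^sup>+u. ennreal (prod_lowest n m g u) \<partial>PiM {..<n} (\<lambda>_. M))"
    by (subst PM.distr_restrict[of "{..<n}" "{..<Suc n}"]) auto
  finally show ?thesis .
qed

lemma nn_integral_prod_lowest_le:
  fixes M :: "real measure"
  assumes M: "prob_space M" "sets M = sets borel" and "0 < m"
    and g: "mono g" "\<And>x. 0 \<le> g x" "\<And>x. g x \<le> 1"
  shows "(\<integral>\<^sup>+u. ennreal (prod_lowest n m g u) \<partial>PiM {..<n} (\<lambda>_. M))
    \<le> ennreal (g x + measure M {x..} ^ n)"
proof -
  interpret M: prob_space M by fact
  interpret PM: product_prob_space "\<lambda>_. M" ..
  let ?E = "Pi\<^sub>E {..<n} (\<lambda>_. {x..})"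
  have E: "?E \<in> sets (PiM {..<n} (\<lambda>_. M))"
    using M(2) by (intro sets_PiM_I_finite) auto
  have pointwise: "prod_lowest n m g u \<le> g x + indicator ?E u"
    if "u \<in> space (PiM {..<n} (\<lambda>_. M))" for u
  proof (cases "u \<in> ?E")
    case True
    have "prod_lowest n m g u \<le> 1"
      using g(2,3) by (rule prod_lowest_le_1)
    with True g(2)[of x] show ?thesis
      by simp
  next
    case False
    with that obtain j where "j < n" "u j < x"
      by (auto simp: space_PiM PiE_iff not_le)
    then have "prod_lowest n m g u \<le> g x"
      using prod_lowest_le_factor[OF \<open>j < n\<close> \<open>0 < m\<close> g, of u] monoD[OF g(1), of "u j" x] by simp
    with False show ?thesis
      by simp
  qed
  have "(\<integral>\<^sup>+u. ennreal (prod_lowest n m g u) \<partial>PiM {..<n} (\<lambda>_. M))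
      \<le> (\<integral>\<^sup>+u. ennreal (g x) + indicator ?E u \<partial>PiM {..<n} (\<lambda>_. M))"
  proof (rule nn_integral_mono)
    fix u assume "u \<in> space (PiM {..<n} (\<lambda>_. M))"
    then have "ennreal (prod_lowest n m g u) \<le> ennreal (g x + indicator ?E u)"
      by (intro ennreal_leI pointwise)
    also have "\<dots> = ennreal (g x) + indicator ?E u"
      using g(2) by (simp add: ennreal_indicator)
    finally show "ennreal (prod_lowest n m g u) \<le> ennreal (g x) + indicator ?E u" .
  qed
  also have "\<dots> = ennreal (g x) + emeasure (PiM {..<n} (\<lambda>_. M)) ?E"
    using E by (subst nn_integral_add) (auto simp: prob_space.emeasure_space_1[OF prob_space_PiM] M.prob_space_axioms)
  also have "emeasure (PiM {..<n} (\<lambda>_. M)) ?E = ennreal (measure M {x..} ^ n)"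
    using M(2) by (simp add: PM.emeasure_PiM M.emeasure_eq_measure prod_ennreal ennreal_power)
  finally show ?thesis
    using g(2) by simp
qed

lemma LIMSEQ_zero_if_bounded_vanishing_plus_geometric:
  fixes f :: "nat \<Rightarrow> real" and a q :: "'a \<Rightarrow> real"
  assumes "\<And>n. 0 \<le> f n" and bound: "\<And>x n. f n \<le> a x + q x ^ n"
    and q: "\<And>x. 0 \<le> q x" "\<And>x. q x < 1" and a: "(a \<longlongrightarrow> 0) F" "F \<noteq> bot"
  shows "f \<longlonglongrightarrow> 0"
proof (rule order_tendstoI)
  fix e :: real assume "e < 0"
  then show "eventually (\<lambda>n. e < f n) sequentially"
    using assms(1) by (intro always_eventually allI) (rule less_le_trans)
next
  fix e :: real assume "0 < e"
  then obtain x where x: "a x < e / 2"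
    using eventually_happens'[OF a(2) order_tendstoD(2)[OF a(1), of "e / 2"]] by auto
  have "(\<lambda>n. q x ^ n) \<longlonglongrightarrow> 0"
    using q by (intro LIMSEQ_power_zero) auto
  then have "eventually (\<lambda>n. q x ^ n < e / 2) sequentially"
    using \<open>0 < e\<close> by (intro order_tendstoD(2)) auto
  then show "eventually (\<lambda>n. f n < e) sequentially"
  proof eventually_elim
    case (elim n)
    with bound[of n x] x show ?case
      by linarith
  qed
qed

section \<open>The Gaussian copula model\<close>

lemma prob_space_std_normal: "prob_space std_normal"
  unfolding std_normal_def by (rule prob_space_normal_density) simp

lemma sets_std_normal [measurable_cong, simp]: "sets std_normal = sets borel"
  by (simp add: std_normal_def)

lemma space_std_normal [simp]: "space std_normal = UNIV"
  by (simp add: std_normal_def)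

lemma real_distribution_std_normal: "real_distribution std_normal"
  by (simp add: real_distribution_def real_distribution_axioms_def prob_space_std_normal)

lemma emeasure_std_normal_singleton: "emeasure std_normal {x} = 0"
proof -
  have "AE y in lborel. y \<in> {x} \<longrightarrow> ennreal (std_normal_density y) = 0"
    using AE_lborel_singleton[of x] by eventually_elim auto
  then have "{x} \<in> null_sets std_normal"
    unfolding std_normal_def by (subst null_sets_density_iff) auto
  then show ?thesis
    by auto
qed

lemma measure_std_normal_atLeast_less_1: "measure std_normal {x..} < 1"
proof -
  interpret N: prob_space std_normal
    by (rule prob_space_std_normal)
  have "{..<x} \<notin> null_sets std_normal"
  proof
    assume "{..<x} \<in> null_sets std_normal"
    then have "AE y in lborel. y \<in> {..<x} \<longrightarrow> ennreal (std_normal_density y) = 0"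
      unfolding std_normal_def by (subst (asm) null_sets_density_iff) auto
    then have "AE y in lborel. y \<notin> {x - 1<..<x}"
      by eventually_elim (auto simp: normal_density_pos less_imp_neq[symmetric])
    then have "{x - 1<..<x} \<in> null_sets lborel"
      by (subst AE_iff_null_sets) auto
    then show False
      by auto
  qed
  then have "0 < measure std_normal {..<x}"
    by (auto simp: null_sets_def N.emeasure_eq_measure zero_less_measure_iff)
  moreover have "measure std_normal {x..} = 1 - measure std_normal {..<x}"
    using N.prob_compl[of "{..<x}"] by (simp add: Compl_eq_Diff_UNIV[symmetric] not_less atLeast_def lessThan_def Compl_eq)
  ultimately show ?thesis
    by simp
qed

lemma prob_space_gauss_pair: "prob_space (gauss_pair \<rho>)"
  unfolding gauss_pair_def
  by (intro prob_space.prob_space_distr prob_space_pair prob_space_std_normal) simp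

lemma sets_gauss_pair [measurable_cong, simp]: "sets (gauss_pair \<rho>) = sets (borel \<Otimes>\<^sub>M borel)"
  by (simp add: gauss_pair_def)

lemma space_gauss_pair [simp]: "space (gauss_pair \<rho>) = UNIV"
  by (simp add: gauss_pair_def space_pair_measure)

lemma xstar_neq_minf:
  assumes "0 < \<alpha>"
  shows "xstar \<alpha> \<rho> \<noteq> -\<infinity>"
proof -
  let ?X = "distr (gauss_pair \<rho>) borel snd"
  interpret X: real_distribution ?X
    using prob_space_gauss_pair by (rule prob_space.real_distribution_distr) simp
  have cdf_X: "cdf ?X x = measure (gauss_pair \<rho>) {p. snd p \<le> x}" for x
    by (simp add: cdf_def measure_distr vimage_def)
  from order_tendstoD(2)[OF X.cdf_lim_at_bot assms]
  obtain x0 where x0: "\<And>x. x \<le> x0 \<Longrightarrow> cdf ?X x < \<alpha>"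
    by (auto simp: eventually_at_bot_linorder)
  have "ereal x0 \<le> xstar \<alpha> \<rho>"
    unfolding xstar_def
  proof (rule Inf_greatest, clarify)
    fix x assume "\<alpha> \<le> measure (gauss_pair \<rho>) {p. snd p \<le> x}"
    then show "ereal x0 \<le> ereal x"
      using x0[of x] by (force simp: cdf_X)
  qed
  then show ?thesis
    by auto
qed

definition exceed_prob_given :: "real \<Rightarrow> ereal \<Rightarrow> real \<Rightarrow> real" where
  "exceed_prob_given \<rho> c x = measure std_normal {v. c < ereal (\<rho> * x + sqrt (1 - \<rho>\<^sup>2) * v)}"

lemma exceed_prob_given_bounds: "0 \<le> exceed_prob_given \<rho> c x" "exceed_prob_given \<rho> c x \<le> 1"
  by (simp_all add: exceed_prob_given_def prob_space.prob_le_1[OF prob_space_std_normal])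

lemma mono_exceed_prob_given:
  assumes "0 \<le> \<rho>"
  shows "mono (exceed_prob_given \<rho> c)"
proof (rule monoI)
  fix x y :: real assume "x \<le> y"
  with assms have "{v. c < ereal (\<rho> * x + sqrt (1 - \<rho>\<^sup>2) * v)} \<subseteq> {v. c < ereal (\<rho> * y + sqrt (1 - \<rho>\<^sup>2) * v)}"
    by (auto elim!: less_le_trans simp: mult_left_mono)
  then show "exceed_prob_given \<rho> c x \<le> exceed_prob_given \<rho> c y"
    unfolding exceed_prob_given_def
    by (intro finite_measure.finite_measure_mono prob_space.finite_measure prob_space_std_normal) auto
qed

lemma exceed_prob_given_tendsto_0:
  assumes "c \<noteq> -\<infinity>" "0 < \<rho>" "\<rho> \<le> 1"
  shows "(exceed_prob_given \<rho> c \<longlongrightarrow> 0) at_bot"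
proof -
  interpret N: real_distribution std_normal
    by (rule real_distribution_std_normal)
  obtain c0 where "ereal c0 \<le> c"
    using \<open>c \<noteq> -\<infinity>\<close> by (cases c) auto
  define s where "s = sqrt (1 - \<rho>\<^sup>2)"
  have s: "0 \<le> s" "s \<le> 1"
    using assms(2,3) by (auto simp: s_def power_le_one)
  have tail: "((\<lambda>t. measure std_normal {t<..}) \<longlongrightarrow> 0) at_top"
  proof -
    have "measure std_normal {t<..} = 1 - cdf std_normal t" for t
      using N.prob_compl[of "{..t}"] by (simp add: cdf_def Compl_eq_Diff_UNIV[symmetric] Compl_eq not_le greaterThan_def)
    then show ?thesis
      using tendsto_diff[OF tendsto_const N.cdf_lim_at_top_prob, of 1] by simp
  qed
  have shift: "filterlim (\<lambda>x. c0 - \<rho> * x) at_top at_bot"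
    unfolding filterlim_at_top eventually_at_bot_linorder
  proof (intro allI exI impI)
    fix Z x :: real assume "x \<le> (c0 - Z) / \<rho>"
    with \<open>0 < \<rho>\<close> show "Z \<le> c0 - \<rho> * x"
      by (simp add: field_simps)
  qed
  have "eventually (\<lambda>x. exceed_prob_given \<rho> c x \<le> measure std_normal {c0 - \<rho> * x<..}) at_bot"
    using shift[unfolded filterlim_at_top, rule_format, of 0]
  proof eventually_elim
    case (elim x)
    have "{v. c < ereal (\<rho> * x + s * v)} \<subseteq> {c0 - \<rho> * x<..}"
    proof
      fix v assume "v \<in> {v. c < ereal (\<rho> * x + s * v)}"
      then have "c < ereal (\<rho> * x + s * v)"
        by simp
      with \<open>ereal c0 \<le> c\<close> have "ereal c0 < ereal (\<rho> * x + s * v)"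
        by (rule le_less_trans)
      then have "c0 - \<rho> * x < s * v"
        by simp
      with elim s show "v \<in> {c0 - \<rho> * x<..}"
        by simp (smt (verit) mult_left_mono mult_left_le_one_le)
    qed
    then show ?case
      unfolding exceed_prob_given_def s_def[symmetric] by (intro N.finite_measure_mono) auto
  qed
  then show ?thesis
    using exceed_prob_given_bounds
    by (intro tendsto_sandwich[OF _ _ tendsto_const filterlim_compose[OF tail shift]]) auto
qed

definition failure_event :: "nat \<Rightarrow> nat \<Rightarrow> ereal \<Rightarrow> (nat \<Rightarrow> real \<times> real) set" where
  "failure_event n m c = {\<omega> \<in> {..<n} \<rightarrow>\<^sub>E UNIV.
     \<forall>j<n. lower_count n (\<lambda>k. fst (\<omega> k)) j < m \<longrightarrow> c < ereal (snd (\<omega> j))}"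

lemma sets_failure_event: "failure_event n m c \<in> sets (PiM {..<n} (\<lambda>_. gauss_pair \<rho>))"
proof -
  let ?P = "PiM {..<n} (\<lambda>_. gauss_pair \<rho>)"
  have component: "(\<lambda>\<omega>. \<omega> k) \<in> ?P \<rightarrow>\<^sub>M borel \<Otimes>\<^sub>M borel" if "k < n" for k
    using measurable_component_singleton[of k "{..<n}" "\<lambda>_. gauss_pair \<rho>"] that
    by (simp add: measurable_cong_sets[OF refl sets_gauss_pair])
  have "{\<omega> \<in> space ?P. lower_count n (\<lambda>k. fst (\<omega> k)) j < m \<longrightarrow> c < ereal (snd (\<omega> j))} \<in> sets ?P"
    if "j < n" for j
  proof -
    have [measurable]: "(\<lambda>\<omega>. \<omega> j) \<in> ?P \<rightarrow>\<^sub>M borel \<Otimes>\<^sub>M borel"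
      using component \<open>j < n\<close> .
    have [measurable]: "Measurable.pred ?P (\<lambda>\<omega>. lower_count n (\<lambda>k. fst (\<omega> k)) j < m)"
      using component by (intro pred_lower_count_less) (auto intro: measurable_compose[OF _ measurable_fst''])
    show ?thesis
      by measurable
  qed
  then have "{\<omega> \<in> space ?P. \<forall>j\<in>{..<n}. lower_count n (\<lambda>k. fst (\<omega> k)) j < m \<longrightarrow> c < ereal (snd (\<omega> j))} \<in> sets ?P"
    by (rule sets.sets_Collect_finite_All) auto
  also have "{\<omega> \<in> space ?P. \<forall>j\<in>{..<n}. lower_count n (\<lambda>k. fst (\<omega> k)) j < m \<longrightarrow> c < ereal (snd (\<omega> j))}
      = failure_event n m c"
    by (auto simp: failure_event_def space_PiM)
  finally show ?thesis .
qed

lemma p_success_G_eq_failure: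
  "p_success_G n m \<alpha> \<rho> = 1 - measure (PiM {..<n} (\<lambda>_. gauss_pair \<rho>)) (failure_event n m (xstar \<alpha> \<rho>))"
proof -
  interpret P: prob_space "PiM {..<n} (\<lambda>_. gauss_pair \<rho>)"
    by (intro prob_space_PiM prob_space_gauss_pair)
  have "{\<omega> \<in> space (PiM {..<n} (\<lambda>_. gauss_pair \<rho>)).
          \<exists>j<n. card {k \<in> {..<n}. fst (\<omega> k) < fst (\<omega> j)} < m \<and> ereal (snd (\<omega> j)) \<le> xstar \<alpha> \<rho>}
      = space (PiM {..<n} (\<lambda>_. gauss_pair \<rho>)) - failure_event n m (xstar \<alpha> \<rho>)"
    unfolding failure_event_def lower_count_def space_PiM by (simp add: not_less set_eq_iff) blast
  then show ?thesis
    by (simp add: p_success_G_def P.prob_compl sets_failure_event)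
qed

lemma emeasure_failure_event:
  "emeasure (PiM {..<n} (\<lambda>_. gauss_pair \<rho>)) (failure_event n m c)
    = (\<integral>\<^sup>+u. ennreal (prod_lowest n m (exceed_prob_given \<rho> c) u) \<partial>PiM {..<n} (\<lambda>_. std_normal))"
proof -
  interpret N: prob_space std_normal
    by (rule prob_space_std_normal)
  let ?N = "PiM {..<n} (\<lambda>_. std_normal)"
  let ?T = "\<lambda>(u, v). (u, \<rho> * u + sqrt (1 - \<rho>\<^sup>2) * v)"
  let ?\<Psi> = "\<lambda>(x, y). \<lambda>j\<in>{..<n}. ?T (x j, y j)"
  let ?F = "failure_event n m c"
  define B where "B u j = {v. lower_count n u j < m \<longrightarrow> c < ereal (\<rho> * u j + sqrt (1 - \<rho>\<^sup>2) * v)}"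
    for u :: "nat \<Rightarrow> real" and j
  have [measurable]: "?T \<in> std_normal \<Otimes>\<^sub>M std_normal \<rightarrow>\<^sub>M borel \<Otimes>\<^sub>M borel"
    by measurable
  have \<Psi>: "?\<Psi> \<in> ?N \<Otimes>\<^sub>M ?N \<rightarrow>\<^sub>M PiM {..<n} (\<lambda>_. borel \<Otimes>\<^sub>M borel)"
    by measurable
  have F: "?F \<in> sets (PiM {..<n} (\<lambda>_. borel \<Otimes>\<^sub>M borel))"
    using sets_failure_event[of n m c \<rho>] by (simp only: sets_PiM_cong[OF refl sets_gauss_pair])
  have B: "B u j \<in> sets std_normal" for u j
    unfolding B_def by measurable
  have sections: "Pair u -` (?\<Psi> -` ?F \<inter> space (?N \<Otimes>\<^sub>M ?N)) = Pi\<^sub>E {..<n} (B u)"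
    if "u \<in> space ?N" for u
  proof -
    have "lower_count n (\<lambda>k. fst (?\<Psi> (u, v) k)) j = lower_count n u j" if "j < n" for v j
      using that by (intro lower_count_cong) auto
    then show ?thesis
      using that by (auto simp: failure_event_def B_def space_pair_measure space_PiM PiE_iff)
  qed
  have "emeasure (PiM {..<n} (\<lambda>_. gauss_pair \<rho>)) ?F
      = emeasure (distr (?N \<Otimes>\<^sub>M ?N) (PiM {..<n} (\<lambda>_. borel \<Otimes>\<^sub>M borel)) ?\<Psi>) ?F"
    unfolding gauss_pair_def by (subst PiM_distr_pair_measure) (auto intro: prob_space_std_normal)
  also have "\<dots> = emeasure (?N \<Otimes>\<^sub>M ?N) (?\<Psi> -` ?F \<inter> space (?N \<Otimes>\<^sub>M ?N))"
    using \<Psi> F by (rule emeasure_distr)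
  also have "\<dots> = (\<integral>\<^sup>+u. (\<Prod>j<n. emeasure std_normal (B u j)) \<partial>?N)"
    by (rule emeasure_pair_PiM_product_sections[OF _ prob_space_std_normal measurable_sets[OF \<Psi> F]
        sections B]) auto
  also have "\<dots> = (\<integral>\<^sup>+u. ennreal (prod_lowest n m (exceed_prob_given \<rho> c) u) \<partial>?N)"
  proof -
    have "emeasure std_normal (B u j)
        = ennreal (if lower_count n u j < m then exceed_prob_given \<rho> c (u j) else 1)" for u j
      using N.emeasure_space_1 by (simp add: B_def exceed_prob_given_def N.emeasure_eq_measure)
    then show ?thesis
      by (simp add: prod_lowest_def prod_ennreal exceed_prob_given_bounds)
  qed
  finally show ?thesis .
qed

lemma measure_failure_event_Suc_le:
  assumes "0 < \<rho>"
  shows "measure (PiM {..<Suc n} (\<lambda>_. gauss_pair \<rho>)) (failure_event (Suc n) m c)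
    \<le> measure (PiM {..<n} (\<lambda>_. gauss_pair \<rho>)) (failure_event n m c)"
proof -
  have "emeasure (PiM {..<Suc n} (\<lambda>_. gauss_pair \<rho>)) (failure_event (Suc n) m c)
      \<le> emeasure (PiM {..<n} (\<lambda>_. gauss_pair \<rho>)) (failure_event n m c)"
    unfolding emeasure_failure_event using assms
    by (intro nn_integral_prod_lowest_Suc_le prob_space_std_normal sets_std_normal
        emeasure_std_normal_singleton mono_exceed_prob_given exceed_prob_given_bounds) auto
  then show ?thesis
    by (simp add: finite_measure.emeasure_eq_measure prob_space.finite_measure prob_space_PiM
        prob_space_gauss_pair)
qed

lemma measure_failure_event_le:
  assumes "0 < \<rho>" "0 < m"
  shows "measure (PiM {..<n} (\<lambda>_. gauss_pair \<rho>)) (failure_event n m c)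
    \<le> exceed_prob_given \<rho> c x + measure std_normal {x..} ^ n"
proof -
  have "emeasure (PiM {..<n} (\<lambda>_. gauss_pair \<rho>)) (failure_event n m c)
      \<le> ennreal (exceed_prob_given \<rho> c x + measure std_normal {x..} ^ n)"
    unfolding emeasure_failure_event using assms
    by (intro nn_integral_prod_lowest_le prob_space_std_normal sets_std_normal
        mono_exceed_prob_given exceed_prob_given_bounds) auto
  moreover have "0 \<le> exceed_prob_given \<rho> c x + measure std_normal {x..} ^ n"
    using exceed_prob_given_bounds(1) by simp
  ultimately show ?thesis
    by (simp add: finite_measure.emeasure_eq_measure prob_space.finite_measure prob_space_PiM
        prob_space_gauss_pair)
qed

theorem mainTheorem8:
  fixes m :: nat and \<alpha> \<rho> :: real
  assumes "m \<ge> 1" and "0 < \<alpha>" and "\<alpha> \<le> 1" and "0 < \<rho>" and "\<rho> \<le> 1"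
  shows "(\<forall>n n'. m \<le> n \<longrightarrow> n \<le> n' \<longrightarrow> p_success_G n m \<alpha> \<rho> \<le> p_success_G n' m \<alpha> \<rho>)
       \<and> (\<lambda>n. p_success_G n m \<alpha> \<rho>) \<longlonglongrightarrow> 1"
proof -
  define fail where "fail n = measure (PiM {..<n} (\<lambda>_. gauss_pair \<rho>)) (failure_event n m (xstar \<alpha> \<rho>))"
    for n
  have success: "p_success_G n m \<alpha> \<rho> = 1 - fail n" for n
    by (simp add: p_success_G_eq_failure fail_def)
  have "decseq fail"
    using \<open>0 < \<rho>\<close> by (intro decseq_SucI) (simp add: fail_def measure_failure_event_Suc_le)
  moreover have "fail \<longlonglongrightarrow> 0"
  proof (rule LIMSEQ_zero_if_bounded_vanishing_plus_geometric)
    show "fail n \<le> exceed_prob_given \<rho> (xstar \<alpha> \<rho>) x + measure std_normal {x..} ^ n" for n x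
      unfolding fail_def using assms by (intro measure_failure_event_le) auto
    \<comment> \<open>Only \<open>0 < \<alpha>\<close> matters here.\<close>
    show "(exceed_prob_given \<rho> (xstar \<alpha> \<rho>) \<longlongrightarrow> 0) at_bot"
      using assms by (intro exceed_prob_given_tendsto_0 xstar_neq_minf)
  qed (simp_all add: fail_def measure_std_normal_atLeast_less_1)
  ultimately show ?thesis
    unfolding success decseq_def using tendsto_diff[OF tendsto_const[of 1], of fail 0] by auto
qed

end
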